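(* Fix $\epsilon_2>0$ and $(u_\pm,v_\pm)$ with $v_\pm>0$ and $u_+<u_--2\epsilon_2$. Then there exists $\epsilon_0>0$ such that for every $0<\epsilon_1<\epsilon_0$ the state $(u_+,v_+)$ lies in the region $S_1S_2(u_-,v_-)$, i.e., the Riemann problem of the perturbed Brio system with data $(u_\pm,v_\pm)$ is solved by a backward shock $S_1$ followed by a forward shock $S_2$.
   Context: Perturbed Brio system: $u_t+(\tfrac12u^2+\tfrac12\epsilon_1v^2)_x=0$, $v_t+(uv-\epsilon_2v)_x=0$, $\epsilon_1,\epsilon_2>0$, $v>0$. Backward shock curve from $(u_-,v_-)$: $u=u_-+(v-v_-)\frac{\epsilon_2-\sqrt{\epsilon_2^2+4\epsilon_1(v+v_-)^2}}{v+v_-}$, $v>v_-$; forward shock curve: $u=u_-+(v-v_-)\frac{\epsilon_2+\sqrt{\epsilon_2^2+4\epsilon_1(v+v_-)^2}}{v+v_-}$, $0<v<v_-$. Being in $S_1S_2(u_-,v_-)$ means there is an intermediate state $(u_*,v_* )$ on the backward shock curve from $(u_-,v_-)$ such that $(u_+,v_+)$ lies on the forward shock curve from $(u_*,v_* )$. *)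

theory Defs
  imports Complex_Main
begin

text \<open>Perturbed Brio system with parameters e1 = epsilon_1, e2 = epsilon_2.\<close>
definition backward_shock :: "real \<Rightarrow> real \<Rightarrow> real \<Rightarrow> real \<Rightarrow> real \<Rightarrow> real \<Rightarrow> bool" where
  "backward_shock e1 e2 ul vl u v \<longleftrightarrow>
     v \<ge> vl \<and>
     u = ul + (v - vl) * (e2 - sqrt (e2^2 + 4 * e1 * (v + vl)^2)) / (v + vl)"

definition forward_shock :: "real \<Rightarrow> real \<Rightarrow> real \<Rightarrow> real \<Rightarrow> real \<Rightarrow> real \<Rightarrow> bool" where
  "forward_shock e1 e2 ul vl u v \<longleftrightarrow>
     0 < v \<and> v \<le> vl \<and>
     u = ul + (v - vl) * (e2 + sqrt (e2^2 + 4 * e1 * (v + vl)^2)) / (v + vl)"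

definition in_S1S2 :: "real \<Rightarrow> real \<Rightarrow> real \<Rightarrow> real \<Rightarrow> real \<Rightarrow> real \<Rightarrow> bool" where
  "in_S1S2 e1 e2 ul vl ur vr \<longleftrightarrow>
     (\<exists>us vs. backward_shock e1 e2 ul vl us vs \<and> forward_shock e1 e2 us vs ur vr)"

end

theory Submission
  imports Defs
begin

text \<open>Parametrise the candidate intermediate state by its height \<open>v\<^sub>* \<ge> max v\<^sub>- v\<^sub>+\<close>: go along
  the backward shock curve from \<open>(u\<^sub>-, v\<^sub>-)\<close> up to \<open>v\<^sub>*\<close>, then along the forward shock curve
  down to \<open>v\<^sub>+\<close>, and call the resulting \<open>u\<close>-value \<open>F v\<^sub>*\<close>. Since
  \<open>2 \<surd>\<epsilon>\<^sub>1 X \<le> \<surd>(\<epsilon>\<^sub>2\<^sup>2 + 4 \<epsilon>\<^sub>1 X\<^sup>2) \<le> \<epsilon>\<^sub>2 + 2 \<surd>\<epsilon>\<^sub>1 X\<close>, both curves have slope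
  \<open>-2\<surd>\<epsilon>\<^sub>1\<close> up to an error of at most \<open>\<epsilon>\<^sub>2\<close> resp. \<open>2\<epsilon>\<^sub>2\<close>. Hence
  \<open>F (max v\<^sub>- v\<^sub>+) \<ge> u\<^sub>- - 2\<epsilon>\<^sub>2 - 2\<surd>\<epsilon>\<^sub>1 \<bar>v\<^sub>- - v\<^sub>+\<bar>\<close>, which exceeds \<open>u\<^sub>+\<close> once \<open>\<epsilon>\<^sub>1\<close> is
  small, while \<open>F v\<^sub>* \<le> u\<^sub>- + \<epsilon>\<^sub>2 - 2\<surd>\<epsilon>\<^sub>1 (v\<^sub>* - v\<^sub>-) \<rightarrow> -\<infinity>\<close>. The intermediate value
  theorem yields \<open>v\<^sub>*\<close> with \<open>F v\<^sub>* = u\<^sub>+\<close>.\<close>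

definition backward_u :: "real \<Rightarrow> real \<Rightarrow> real \<Rightarrow> real \<Rightarrow> real \<Rightarrow> real" where
  "backward_u e1 e2 ul vl v = ul + (v - vl) * (e2 - sqrt (e2^2 + 4 * e1 * (v + vl)^2)) / (v + vl)"

definition forward_u :: "real \<Rightarrow> real \<Rightarrow> real \<Rightarrow> real \<Rightarrow> real \<Rightarrow> real" where
  "forward_u e1 e2 ul vl v = ul + (v - vl) * (e2 + sqrt (e2^2 + 4 * e1 * (v + vl)^2)) / (v + vl)"

lemma backward_shock_iff:
  "backward_shock e1 e2 ul vl u v \<longleftrightarrow> vl \<le> v \<and> u = backward_u e1 e2 ul vl v"
  by (simp add: backward_shock_def backward_u_def)

lemma forward_shock_iff:
  "forward_shock e1 e2 ul vl u v \<longleftrightarrow> 0 < v \<and> v \<le> vl \<and> u = forward_u e1 e2 ul vl v"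
  by (simp add: forward_shock_def forward_u_def)

lemma sqrt_shock_bounds:
  fixes e1 e2 X :: real
  assumes "0 \<le> e1" "0 \<le> e2" "0 \<le> X"
  shows "2 * sqrt e1 * X \<le> sqrt (e2^2 + 4 * e1 * X^2)"
    and "sqrt (e2^2 + 4 * e1 * X^2) \<le> e2 + 2 * sqrt e1 * X"
proof -
  have eq: "e2^2 + 4 * e1 * X^2 = e2^2 + (2 * sqrt e1 * X)^2"
    using assms by (simp add: power_mult_distrib)
  show "2 * sqrt e1 * X \<le> sqrt (e2^2 + 4 * e1 * X^2)"
    unfolding eq by (rule real_sqrt_sum_squares_ge2)
  show "sqrt (e2^2 + 4 * e1 * X^2) \<le> e2 + 2 * sqrt e1 * X"
    unfolding eq using assms by (intro sqrt_sum_squares_le_sum) auto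
qed

lemma backward_u_bounds:
  fixes e1 e2 ul vl v :: real
  assumes "0 \<le> e1" "0 \<le> e2" "0 < vl" "vl \<le> v"
  shows "ul - 2 * sqrt e1 * (v - vl) \<le> backward_u e1 e2 ul vl v"
    and "backward_u e1 e2 ul vl v \<le> ul + e2 - 2 * sqrt e1 * (v - vl)"
proof -
  define X where "X = v + vl"
  define q where "q = sqrt (e2^2 + 4 * e1 * X^2)"
  define t where "t = (v - vl) / X"
  have X: "0 < X" using assms by (simp add: X_def)
  have t: "0 \<le> t" "t \<le> 1" using assms X by (simp_all add: t_def X_def)
  have q: "2 * sqrt e1 * X \<le> q" "q \<le> e2 + 2 * sqrt e1 * X"
    using sqrt_shock_bounds[OF assms(1,2), of X] X by (simp_all add: q_def)
  have u: "backward_u e1 e2 ul vl v = ul + t * (e2 - q)"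
    by (simp add: backward_u_def t_def q_def X_def)
  have tX: "t * X = v - vl" using X by (simp add: t_def)
  have "t * (- 2 * sqrt e1 * X) \<le> t * (e2 - q)"
    using t q by (intro mult_left_mono) auto
  then show "ul - 2 * sqrt e1 * (v - vl) \<le> backward_u e1 e2 ul vl v"
    unfolding u tX[symmetric] by (simp add: algebra_simps)
  have "t * (e2 - q) \<le> t * (e2 - 2 * sqrt e1 * X)"
    using t q by (intro mult_left_mono) auto
  moreover have "t * e2 \<le> e2" using t assms(2) by (simp add: mult_left_le_one_le)
  ultimately show "backward_u e1 e2 ul vl v \<le> ul + e2 - 2 * sqrt e1 * (v - vl)"
    unfolding u tX[symmetric] by (simp add: algebra_simps)
qed

lemma forward_u_bounds:
  fixes e1 e2 ul vl v :: real
  assumes "0 \<le> e1" "0 \<le> e2" "0 < v" "v \<le> vl"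
  shows "ul - 2 * e2 - 2 * sqrt e1 * (vl - v) \<le> forward_u e1 e2 ul vl v"
    and "forward_u e1 e2 ul vl v \<le> ul"
proof -
  define X where "X = v + vl"
  define q where "q = sqrt (e2^2 + 4 * e1 * X^2)"
  define t where "t = (vl - v) / X"
  have X: "0 < X" using assms by (simp add: X_def)
  have t: "0 \<le> t" "t \<le> 1" using assms X by (simp_all add: t_def X_def)
  have q: "2 * sqrt e1 * X \<le> q" "q \<le> e2 + 2 * sqrt e1 * X"
    using sqrt_shock_bounds[OF assms(1,2), of X] X by (simp_all add: q_def)
  have u: "forward_u e1 e2 ul vl v = ul - t * (e2 + q)"
    unfolding forward_u_def t_def q_def X_def[symmetric] using X by (simp add: field_simps)
  have tX: "t * X = vl - v" using X by (simp add: t_def)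
  have "t * (e2 + q) \<le> t * (2 * e2 + 2 * sqrt e1 * X)"
    using t q by (intro mult_left_mono) auto
  moreover have "t * e2 \<le> e2" using t assms(2) by (simp add: mult_left_le_one_le)
  ultimately show "ul - 2 * e2 - 2 * sqrt e1 * (vl - v) \<le> forward_u e1 e2 ul vl v"
    unfolding u tX[symmetric] by (simp add: algebra_simps)
  have "0 \<le> 2 * sqrt e1 * X" using X assms(1) by simp
  with q(1) have "0 \<le> q" by linarith
  then show "forward_u e1 e2 ul vl v \<le> ul"
    unfolding u using t assms(2) by simp
qed

lemma isCont_forward_u_backward_u:
  fixes e1 e2 ul vl vr v :: real
  assumes "0 < v + vl" "0 < vr + v"
  shows "isCont (\<lambda>v. forward_u e1 e2 (backward_u e1 e2 ul vl v) v vr) v"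
  using assms unfolding forward_u_def backward_u_def
  by (intro continuous_intros) auto

lemma in_S1S2_if_gap:
  fixes e1 e2 ul vl ur vr :: real
  assumes "0 < e1" "0 < e2" "0 < vl" "0 < vr"
    and gap: "ur + 2 * e2 + 2 * sqrt e1 * \<bar>vl - vr\<bar> \<le> ul"
  shows "in_S1S2 e1 e2 ul vl ur vr"
proof -
  define F where "F v = forward_u e1 e2 (backward_u e1 e2 ul vl v) v vr" for v
  define s where "s = sqrt e1"
  have s: "0 < s" using assms(1) by (simp add: s_def)
  have e: "0 \<le> e1" "0 \<le> e2" using assms by auto
  define V0 where "V0 = max vl vr"
  define V1 where "V1 = V0 + (ul + e2 - ur) / (2 * s)"
  have V0: "vl \<le> V0" "vr \<le> V0" "(V0 - vl) + (V0 - vr) = \<bar>vl - vr\<bar>"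
    by (auto simp: V0_def)
  have "0 \<le> sqrt e1 * \<bar>vl - vr\<bar>" using assms(1) by simp
  with gap assms(2) have "0 \<le> ul + e2 - ur" by linarith
  then have V01: "V0 \<le> V1" "2 * s * (V1 - V0) = ul + e2 - ur"
    using s by (simp_all add: V1_def)
  have "ur \<le> ul - 2 * e2 - 2 * s * ((V0 - vl) + (V0 - vr))"
    using gap V0(3) by (simp add: s_def)
  also have "\<dots> \<le> F V0"
    using backward_u_bounds(1)[OF e assms(3) V0(1), of ul]
      forward_u_bounds(1)[OF e assms(4) V0(2), of "backward_u e1 e2 ul vl V0"]
    unfolding F_def s_def by (simp add: algebra_simps)
  finally have "ur \<le> F V0" .
  moreover have "F V1 \<le> ur"
  proof -
    have "F V1 \<le> ul + e2 - 2 * s * (V1 - vl)"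
      using backward_u_bounds(2)[OF e assms(3), of V1 ul]
        forward_u_bounds(2)[OF e assms(4), of V1 "backward_u e1 e2 ul vl V1"] V0 V01
      unfolding F_def s_def by linarith
    also have "\<dots> \<le> ul + e2 - 2 * s * (V1 - V0)"
      using mult_left_mono[OF V0(1), of s] s by (simp add: algebra_simps)
    finally show ?thesis using V01 by simp
  qed
  moreover have "\<forall>v. V0 \<le> v \<and> v \<le> V1 \<longrightarrow> isCont F v"
    using V0 assms(3,4) unfolding F_def
    by (auto intro!: isCont_forward_u_backward_u)
  ultimately obtain vs where vs: "V0 \<le> vs" "F vs = ur"
    using IVT2[of F V1 ur V0] V01(1) by blast
  have "backward_shock e1 e2 ul vl (backward_u e1 e2 ul vl vs) vs"
    using vs V0 by (simp add: backward_shock_iff)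
  moreover have "forward_shock e1 e2 (backward_u e1 e2 ul vl vs) vs ur vr"
    using vs V0 assms(4) by (simp add: forward_shock_iff F_def)
  ultimately show ?thesis
    unfolding in_S1S2_def by blast
qed

theorem lemma6p1:
  fixes e2 um vm up vp :: real
  assumes "e2 > 0" and "vm > 0" and "vp > 0" and "up < um - 2 * e2"
  shows "\<exists>e0 > 0. \<forall>e1. 0 < e1 \<and> e1 < e0 \<longrightarrow> in_S1S2 e1 e2 um vm up vp"
proof -
  define d where "d = um - 2 * e2 - up"
  define e0 where "e0 = (d / (2 * (vm + vp)))^2"
  have d: "0 < d" using assms(4) by (simp add: d_def)
  have "in_S1S2 e1 e2 um vm up vp" if e1: "0 < e1" "e1 < e0" for e1
  proof (rule in_S1S2_if_gap[OF e1(1) assms(1-3)])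
    have "sqrt e1 < d / (2 * (vm + vp))"
      using real_sqrt_less_mono[OF e1(2)] e1(1) d assms(2,3) by (simp add: e0_def)
    then have "2 * sqrt e1 * (vm + vp) < d"
      using assms(2,3) by (simp add: field_simps)
    moreover have "sqrt e1 * \<bar>vm - vp\<bar> \<le> sqrt e1 * (vm + vp)"
      using assms(2,3) e1(1) by (intro mult_left_mono) auto
    ultimately show "up + 2 * e2 + 2 * sqrt e1 * \<bar>vm - vp\<bar> \<le> um"
      by (simp add: d_def)
  qed
  moreover have "0 < e0" using d assms(2,3) by (simp add: e0_def)
  ultimately show ?thesis by blast
qed

end
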